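(* Let $\mathcal F_0\subset\mathcal F_1\subset\dots\subset\mathcal F_T$ be a filtration, $\alpha=(\alpha_k,\dots,\alpha_{k_{\max}})$ a probability distribution on $\{k,\dots,k_{\max}\}$, $c_{\max}>0$ and $\delta\in(0,1)$. Let $i_1,\dots,i_T$ be random indices with $i_t$ being $\mathcal F_t$-measurable, distributed according to $\alpha$, and independent of $\mathcal F_{t-1}$, and let $c_1,\dots,c_T\in[0,c_{\max}]$ with $c_t$ being $\mathcal F_{t-1}$-measurable. Define $C^{\mathsf a}_t=\sum_{\tau\le t}c_\tau$, $C^{\mathsf r}_t=\sqrt{t\sum_{\tau\le t}c_\tau^2}$, $C^{\mathsf a}_{t,i}=\sum_{\tau\le t}\mathbf 1[i_\tau=i]c_\tau$ and $C^{\mathsf r}_{t,i}=\sqrt{\big(\sum_{\tau\le t}\mathbf 1[i_\tau=i]\big)\big(\sum_{\tau\le t}\mathbf 1[i_\tau=i]c_\tau^2\big)}$. Then for any fixed $i$, with probability at least $1-3\delta$, for all $t\le T$, $$C^{\mathsf a}_{t,i}\le1.25\alpha_iC^{\mathsf a}_t+21c_{\max}\log(T/\delta),$$ $$C^{\mathsf r}_{t,i}\le1.25\alpha_iC^{\mathsf r}_t+8c_{\max}\sqrt{\alpha_it\log(T/\delta)}+21c_{\max}\log(T/\delta).$$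
   Context: In the paper, $c_t$ is the corruption level of round $t$, chosen by an adaptive adversary based on the history up to round $t-1$, and $i_t$ is the index of the base algorithm sampled independently from $\alpha$ in round $t$ of the procedure BASIC; $C^{\mathsf a}_{t,i}$, $C^{\mathsf r}_{t,i}$ are the (arithmetic / root-mean-square type) corruption experienced by base algorithm $i$. $\log$ is the natural logarithm. *)

theory Defs
  imports "HOL-Probability.Probability"
begin

definition Ca :: "(nat \<Rightarrow> 'a \<Rightarrow> real) \<Rightarrow> nat \<Rightarrow> 'a \<Rightarrow> real" where
  "Ca c t x = (\<Sum>\<tau>\<in>{1..t}. c \<tau> x)"

definition Cr :: "(nat \<Rightarrow> 'a \<Rightarrow> real) \<Rightarrow> nat \<Rightarrow> 'a \<Rightarrow> real" where
  "Cr c t x = sqrt (real t * (\<Sum>\<tau>\<in>{1..t}. (c \<tau> x)^2))"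

definition Cai :: "(nat \<Rightarrow> 'a \<Rightarrow> real) \<Rightarrow> (nat \<Rightarrow> 'a \<Rightarrow> nat) \<Rightarrow> nat \<Rightarrow> nat \<Rightarrow> 'a \<Rightarrow> real" where
  "Cai c I t j x = (\<Sum>\<tau>\<in>{1..t}. (if I \<tau> x = j then 1 else 0) * c \<tau> x)"

definition Cri :: "(nat \<Rightarrow> 'a \<Rightarrow> real) \<Rightarrow> (nat \<Rightarrow> 'a \<Rightarrow> nat) \<Rightarrow> nat \<Rightarrow> nat \<Rightarrow> 'a \<Rightarrow> real" where
  "Cri c I t j x = sqrt ((\<Sum>\<tau>\<in>{1..t}. (if I \<tau> x = j then 1 else 0))
                       * (\<Sum>\<tau>\<in>{1..t}. (if I \<tau> x = j then 1 else 0) * (c \<tau> x)^2))"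

end

(* For a predictable weight sequence 0 <= d_t <= D and l = 1/(4 D), the running products of
   exp (l 1[i_t = j] d_t) / E[exp (l 1[i_t = j] d_t) | F_(t-1)] form a martingale with mean 1,
   because i_t is independent of F_(t-1) and equals j with probability alpha_j. Since
   exp x <= 1 + 1.25 x on [0, 1/4], each denominator is at most exp (1.25 alpha_j l d_t), so
   Markov's inequality gives sum_t 1[i_t = j] d_t <= 1.25 alpha_j sum_t d_t + 4 D log (T/delta)
   outside an event of probability delta/T. Taking d = c, d = 1 and d = c^2 and a union bound
   over the rounds, the first bound is the claim for C^a_{t,i}, and the other two bound the two
   factors of C^r_{t,i}, whose geometric mean is then estimated by elementary algebra. *)

theory Submission
  imports Defs
begin

lemma (in prob_space) integral_mult_indicator_indep:
  fixes W :: "'a \<Rightarrow> real" and Y :: "'a \<Rightarrow> 'b"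
  assumes G: "subalgebra M G"
    and indep: "indep_set (sets G) (sets (vimage_algebra (space M) Y (count_space UNIV)))"
    and W: "W \<in> borel_measurable G" "integrable M W"
    and Y: "Y \<in> measurable M (count_space UNIV)"
  shows "(\<integral>x. W x * (if Y x = y then 1 else 0) \<partial>M) = (\<integral>x. W x \<partial>M) * prob {x \<in> space M. Y x = y}"
proof -
  define Z where "Z x = (if Y x = y then 1 else 0 :: real)" for x
  have "sigma_sets (space G) {W -` A \<inter> space G | A. A \<in> sets borel} \<subseteq> sets G"
    using W(1) by (intro sets.sigma_sets_subset) (auto simp: measurable_def)
  then have sW: "sigma_sets (space M) {W -` A \<inter> space M | A. A \<in> sets borel} \<subseteq> sets G"
    using G by (simp add: subalgebra_def)
  have "{Z -` A \<inter> space M | A. A \<in> sets borel} \<subseteq> {Y -` B \<inter> space M | B. B \<in> sets (count_space UNIV)}"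
  proof safe
    fix A :: "real set"
    have "Z -` A \<inter> space M = Y -` {l. (if l = y then 1 else 0) \<in> A} \<inter> space M"
      by (auto simp: Z_def)
    then show "\<exists>B. Z -` A \<inter> space M = Y -` B \<inter> space M \<and> B \<in> sets (count_space UNIV)"
      by (intro exI[of _ "{l. (if l = y then 1 else 0) \<in> A}"]) simp
  qed
  then have sZ: "sigma_sets (space M) {Z -` A \<inter> space M | A. A \<in> sets borel}
      \<subseteq> sets (vimage_algebra (space M) Y (count_space UNIV))"
    unfolding sets_vimage_algebra by (rule sigma_sets_subseteq)
  have Z_meas: "Z \<in> borel_measurable M"
    using Y unfolding Z_def by measurable
  have "indep_set (sigma_sets (space M) {W -` A \<inter> space M | A. A \<in> sets borel})
      (sigma_sets (space M) {Z -` A \<inter> space M | A. A \<in> sets borel})"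
    unfolding indep_set_def
    by (rule indep_sets_mono_sets[OF indep[unfolded indep_set_def]]) (use sW sZ in \<open>auto split: bool.split\<close>)
  then have "indep_var borel W borel Z"
    using W(2) Z_meas by (simp add: indep_var_eq)
  moreover have "integrable M Z"
    using Z_meas by (intro integrable_const_bound[where B=1]) (auto simp: Z_def)
  ultimately have "(\<integral>x. W x * Z x \<partial>M) = (\<integral>x. W x \<partial>M) * (\<integral>x. Z x \<partial>M)"
    using W(2) by (intro indep_var_lebesgue_integral)
  also have "(\<integral>x. Z x \<partial>M) = (\<integral>x. indicator {x \<in> space M. Y x = y} x \<partial>M)"
    by (rule Bochner_Integration.integral_cong) (auto simp: Z_def)
  finally show ?thesis
    using Y by (simp add: Z_def)
qed

lemma (in prob_space) prob_finite_Ball_ge: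
  fixes e :: real
  assumes "finite S"
    and events: "\<And>s. s \<in> S \<Longrightarrow> {x \<in> space M. \<not> P s x} \<in> events"
    and bound: "\<And>s. s \<in> S \<Longrightarrow> prob {x \<in> space M. \<not> P s x} \<le> e"
  shows "1 - card S * e \<le> prob {x \<in> space M. \<forall>s\<in>S. P s x}"
proof -
  let ?B = "\<Union>s\<in>S. {x \<in> space M. \<not> P s x}"
  have "prob ?B \<le> (\<Sum>s\<in>S. prob {x \<in> space M. \<not> P s x})"
    using \<open>finite S\<close> events by (rule measure_UNION_le)
  also have "\<dots> \<le> card S * e"
    using bound sum_bounded_above[of S _ e] by simp
  finally have "1 - card S * e \<le> prob (space M - ?B)"
    using \<open>finite S\<close> events by (subst prob_compl) auto
  also have "space M - ?B = {x \<in> space M. \<forall>s\<in>S. P s x}"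
    by auto
  finally show ?thesis .
qed

lemma divide_le_self: "0 \<le> (a::real) \<Longrightarrow> 1 \<le> b \<Longrightarrow> a / b \<le> a"
  using divide_left_mono[of 1 b a] by simp

lemma exp_le_one_plus_five_quarters:
  fixes x :: real
  assumes "0 \<le> x" "x \<le> 1/4"
  shows "exp x \<le> 1 + 1.25 * x"
proof -
  have "exp x \<le> 1 + x + x\<^sup>2"
    using assms by (intro exp_bound) auto
  moreover have "x\<^sup>2 \<le> x / 4"
    using assms mult_left_mono[of x "1/4" x] by (simp add: power2_eq_square)
  ultimately show ?thesis
    by simp
qed

lemma corruptions_measurable:
  fixes c :: "nat \<Rightarrow> 'a \<Rightarrow> real" and I :: "nat \<Rightarrow> 'a \<Rightarrow> nat"
  assumes [measurable]: "\<And>\<tau>. \<tau> \<in> {1..t} \<Longrightarrow> c \<tau> \<in> borel_measurable M"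
    "\<And>\<tau>. \<tau> \<in> {1..t} \<Longrightarrow> I \<tau> \<in> measurable M (count_space UNIV)"
  shows "Ca c t \<in> borel_measurable M" "Cr c t \<in> borel_measurable M"
    "Cai c I t j \<in> borel_measurable M" "Cri c I t j \<in> borel_measurable M"
  unfolding Ca_def[abs_def] Cr_def[abs_def] Cai_def[abs_def] Cri_def[abs_def] by measurable

lemma sqrt_mult_le_of_linear_bounds:
  fixes N Q s t a L m :: real
  assumes "0 \<le> N" "0 \<le> Q" "0 \<le> s" "s \<le> t * m\<^sup>2" "0 \<le> a" "0 \<le> m" "0 \<le> L" "0 \<le> t"
    and "N \<le> a * t + 4 * L" "Q \<le> a * s + 4 * m\<^sup>2 * L"
  shows "sqrt (N * Q) \<le> a * sqrt (t * s) + 4 * m * sqrt (a * t * L) + 4 * m * L"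
proof -
  define A where "A = a * sqrt (t * s)"
  define B where "B = 4 * m * sqrt (a * t * L)"
  define C where "C = 4 * m * L"
  have "A \<ge> 0" "B \<ge> 0" "C \<ge> 0"
    using assms by (auto simp: A_def B_def C_def)
  have "(sqrt (t * s))\<^sup>2 = t * s" "(sqrt (a * t * L))\<^sup>2 = a * t * L"
    using assms by simp_all
  then have A2: "A\<^sup>2 = a\<^sup>2 * (t * s)" and B2: "B\<^sup>2 = 16 * m\<^sup>2 * (a * t * L)"
    unfolding A_def B_def by (simp_all only: power_mult_distrib) simp
  have "N * Q \<le> (a * t + 4 * L) * (a * s + 4 * m\<^sup>2 * L)"
    using assms by (intro mult_mono) auto
  also have "\<dots> = a\<^sup>2 * (t * s) + 4 * a * t * m\<^sup>2 * L + 4 * a * s * L + 16 * m\<^sup>2 * L\<^sup>2"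
    by (simp add: algebra_simps power2_eq_square)
  also have "\<dots> \<le> a\<^sup>2 * (t * s) + 8 * a * t * m\<^sup>2 * L + 16 * m\<^sup>2 * L\<^sup>2"
    using assms mult_right_mono[OF mult_left_mono[OF \<open>s \<le> t * m\<^sup>2\<close> \<open>0 \<le> a\<close>] \<open>0 \<le> L\<close>]
    by (simp add: algebra_simps)
  also have "\<dots> \<le> A\<^sup>2 + B\<^sup>2 + C\<^sup>2"
    unfolding A2 B2 using assms by (simp add: C_def power_mult_distrib algebra_simps)
  also have "\<dots> \<le> (A + B + C)\<^sup>2"
    using \<open>A \<ge> 0\<close> \<open>B \<ge> 0\<close> \<open>C \<ge> 0\<close> by (simp add: power2_eq_square algebra_simps)
  finally have "sqrt (N * Q) \<le> A + B + C"
    using \<open>A \<ge> 0\<close> \<open>B \<ge> 0\<close> \<open>C \<ge> 0\<close> by (simp add: real_le_lsqrt)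
  then show ?thesis
    by (simp add: A_def B_def C_def)
qed

lemma corruption_bounds_of_count_bounds:
  fixes c :: "nat \<Rightarrow> 'a \<Rightarrow> real" and I :: "nat \<Rightarrow> 'a \<Rightarrow> nat"
  assumes c: "\<And>\<tau>. \<tau> \<in> {1..t} \<Longrightarrow> 0 \<le> c \<tau> x \<and> c \<tau> x \<le> cmax"
    and "0 < cmax" "0 \<le> a" "0 \<le> L"
    and sum_c: "(\<Sum>\<tau>\<in>{1..t}. (if I \<tau> x = j then 1 else 0) * c \<tau> x)
      \<le> 1.25 * a * (\<Sum>\<tau>\<in>{1..t}. c \<tau> x) + 4 * cmax * L"
    and count: "(\<Sum>\<tau>\<in>{1..t}. if I \<tau> x = j then 1 else 0) \<le> 1.25 * a * t + 4 * L"
    and sum_c2: "(\<Sum>\<tau>\<in>{1..t}. (if I \<tau> x = j then 1 else 0) * (c \<tau> x)\<^sup>2)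
      \<le> 1.25 * a * (\<Sum>\<tau>\<in>{1..t}. (c \<tau> x)\<^sup>2) + 4 * cmax\<^sup>2 * L"
  shows "Cai c I t j x \<le> 1.25 * a * Ca c t x + 21 * cmax * L
    \<and> Cri c I t j x \<le> 1.25 * a * Cr c t x + 8 * cmax * sqrt (a * t * L) + 21 * cmax * L"
proof
  have "4 * cmax * L \<le> 21 * cmax * L"
    using assms by (simp add: mult_right_mono)
  then show "Cai c I t j x \<le> 1.25 * a * Ca c t x + 21 * cmax * L"
    using sum_c unfolding Cai_def Ca_def by linarith
  have "sqrt (1.25 * a * t * L) \<le> sqrt (4 * (a * t * L))"
    using assms by simp
  also have "\<dots> = 2 * sqrt (a * t * L)"
    by (simp only: real_sqrt_mult[of 4 "a * t * L"] real_sqrt_four)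
  finally have "4 * cmax * sqrt (1.25 * a * t * L) \<le> 8 * cmax * sqrt (a * t * L)"
    using \<open>0 < cmax\<close> by simp
  moreover have "(\<Sum>\<tau>\<in>{1..t}. (c \<tau> x)\<^sup>2) \<le> (\<Sum>\<tau>\<in>{1..t}. cmax\<^sup>2)"
    using c by (intro sum_mono power_mono) auto
  then have "Cri c I t j x \<le> 1.25 * a * Cr c t x + 4 * cmax * sqrt (1.25 * a * t * L) + 4 * cmax * L"
    unfolding Cri_def Cr_def using assms count sum_c2
    by (intro sqrt_mult_le_of_linear_bounds) (auto intro: sum_nonneg)
  ultimately show "Cri c I t j x \<le> 1.25 * a * Cr c t x + 8 * cmax * sqrt (a * t * L) + 21 * cmax * L"
    using \<open>4 * cmax * L \<le> 21 * cmax * L\<close> by linarith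
qed

locale sampled_index = prob_space M for M :: "'a measure" +
  fixes F :: "nat \<Rightarrow> 'a measure" and I :: "nat \<Rightarrow> 'a \<Rightarrow> nat" and T j :: nat and p :: real
  assumes filtration_sub: "\<And>t. t \<le> T \<Longrightarrow> subalgebra M (F t)"
    and filtration_mono: "\<And>s t. s \<le> t \<Longrightarrow> t \<le> T \<Longrightarrow> subalgebra (F t) (F s)"
    and I_measurable: "\<And>t. t \<in> {1..T} \<Longrightarrow> I t \<in> measurable (F t) (count_space UNIV)"
    and prob_I_eq: "\<And>t. t \<in> {1..T} \<Longrightarrow> prob {x \<in> space M. I t x = j} = p"
    and I_indep: "\<And>t. t \<in> {1..T} \<Longrightarrow>
      indep_set (sets (F (t - 1))) (sets (vimage_algebra (space M) (I t) (count_space UNIV)))"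
begin

definition hit :: "nat \<Rightarrow> 'a \<Rightarrow> real" where
  "hit t x = (if I t x = j then 1 else 0)"

definition predictable :: "(nat \<Rightarrow> 'a \<Rightarrow> real) \<Rightarrow> bool" where
  "predictable d \<longleftrightarrow> (\<forall>t\<in>{1..T}. d t \<in> borel_measurable (F (t - 1)))"

lemma measurable_filtration: "f \<in> measurable (F t) N \<Longrightarrow> t \<le> T \<Longrightarrow> f \<in> measurable M N"
  by (rule measurable_from_subalg[OF filtration_sub])

lemma measurable_filtration_mono:
  "f \<in> measurable (F s) N \<Longrightarrow> s \<le> t \<Longrightarrow> t \<le> T \<Longrightarrow> f \<in> measurable (F t) N"
  by (rule measurable_from_subalg[OF filtration_mono])

lemma hit_measurable:
  assumes "\<tau> \<in> {1..n}" "n \<le> T"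
  shows "hit \<tau> \<in> borel_measurable (F n)"
proof -
  have [measurable]: "I \<tau> \<in> measurable (F n) (count_space UNIV)"
    using assms by (intro measurable_filtration_mono[OF I_measurable]) auto
  show ?thesis
    unfolding hit_def[abs_def] by measurable
qed

lemma predictable_measurable:
  assumes "predictable d" "\<tau> \<in> {1..n}" "n \<le> T"
  shows "d \<tau> \<in> borel_measurable (F n)"
proof (rule measurable_filtration_mono)
  show "d \<tau> \<in> borel_measurable (F (\<tau> - 1))"
    using assms unfolding predictable_def by auto
qed (use assms in auto)

lemma p_nonneg: "t \<in> {1..T} \<Longrightarrow> 0 \<le> p"
  using prob_I_eq measure_nonneg by metis

lemma integral_add_mult_hit:
  assumes t: "t \<in> {1..T}" and U: "integrable M U"
    and V: "V \<in> borel_measurable (F (t - 1))" "integrable M V"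
  shows "(\<integral>x. U x + V x * hit t x \<partial>M) = (\<integral>x. U x + p * V x \<partial>M)"
proof -
  have hit_M: "hit t \<in> borel_measurable M"
    using t measurable_filtration[OF hit_measurable[of t t]] by auto
  have "(\<lambda>x. V x * hit t x) \<in> borel_measurable M"
    using borel_measurable_integrable[OF V(2)] hit_M by (rule borel_measurable_times)
  then have "integrable M (\<lambda>x. V x * hit t x)"
    by (rule Bochner_Integration.integrable_bound[OF V(2)]) (auto simp: hit_def)
  moreover have "(\<integral>x. V x * hit t x \<partial>M) = (\<integral>x. V x \<partial>M) * p"
    using integral_mult_indicator_indep[OF filtration_sub I_indep[OF t] V
        measurable_filtration[OF I_measurable[OF t]]] t prob_I_eq[OF t]
    unfolding hit_def by auto
  ultimately show ?thesis
    using U V(2) by simp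
qed

text \<open>For predictable \<open>d\<close>, \<open>cond_mgf l d t\<close> is the conditional expectation of
  \<open>exp (l * hit t * d t)\<close> given \<open>F (t - 1)\<close>, so \<open>exp_mart l d\<close> is a martingale with mean 1.\<close>

definition cond_mgf :: "real \<Rightarrow> (nat \<Rightarrow> 'a \<Rightarrow> real) \<Rightarrow> nat \<Rightarrow> 'a \<Rightarrow> real" where
  "cond_mgf l d t x = 1 + p * (exp (l * d t x) - 1)"

definition exp_mart :: "real \<Rightarrow> (nat \<Rightarrow> 'a \<Rightarrow> real) \<Rightarrow> nat \<Rightarrow> 'a \<Rightarrow> real" where
  "exp_mart l d n x = (\<Prod>\<tau>\<in>{1..n}. exp (l * hit \<tau> x * d \<tau> x) / cond_mgf l d \<tau> x)"

context
  fixes l D :: real and d :: "nat \<Rightarrow> 'a \<Rightarrow> real"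
  assumes l: "0 \<le> l" and d_pred: "predictable d"
    and d_range: "\<And>t x. t \<in> {1..T} \<Longrightarrow> x \<in> space M \<Longrightarrow> 0 \<le> d t x \<and> d t x \<le> D"
begin

lemma exp_mult_bounds:
  "t \<in> {1..T} \<Longrightarrow> x \<in> space M \<Longrightarrow> 1 \<le> exp (l * d t x) \<and> exp (l * d t x) \<le> exp (l * D)"
  using d_range l by (simp add: mult_left_mono)

lemma one_le_cond_mgf: "t \<in> {1..T} \<Longrightarrow> x \<in> space M \<Longrightarrow> 1 \<le> cond_mgf l d t x"
  using exp_mult_bounds p_nonneg by (simp add: cond_mgf_def)

lemma cond_mgf_le_exp:
  assumes "l * D \<le> 1/4" "t \<in> {1..T}" "x \<in> space M"
  shows "cond_mgf l d t x \<le> exp (1.25 * p * l * d t x)"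
proof -
  have "l * d t x \<le> l * D"
    using d_range[OF assms(2,3)] l by (intro mult_left_mono) auto
  then have "exp (l * d t x) - 1 \<le> 1.25 * (l * d t x)"
    using exp_le_one_plus_five_quarters[of "l * d t x"] d_range[OF assms(2,3)] l assms(1) by simp
  then have "p * (exp (l * d t x) - 1) \<le> p * (1.25 * (l * d t x))"
    using p_nonneg[OF assms(2)] by (rule mult_left_mono)
  then have "cond_mgf l d t x \<le> 1 + 1.25 * p * l * d t x"
    by (simp add: cond_mgf_def mult_ac)
  also have "\<dots> \<le> exp (1.25 * p * l * d t x)"
    by (rule exp_ge_add_one_self)
  finally show ?thesis .
qed

lemma exp_mart_measurable:
  assumes "n \<le> T"
  shows "exp_mart l d n \<in> borel_measurable (F n)"
proof -
  have [measurable]: "hit \<tau> \<in> borel_measurable (F n)" "d \<tau> \<in> borel_measurable (F n)" if "\<tau> \<in> {1..n}" for \<tau>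
    using that assms hit_measurable predictable_measurable[OF d_pred] by auto
  show ?thesis
    unfolding exp_mart_def[abs_def] cond_mgf_def by measurable
qed

lemma exp_mart_bounds:
  assumes "n \<le> T" "x \<in> space M"
  shows "0 \<le> exp_mart l d n x \<and> exp_mart l d n x \<le> exp (l * D) ^ n"
proof -
  have factor: "0 \<le> exp (l * hit \<tau> x * d \<tau> x) / cond_mgf l d \<tau> x"
    "exp (l * hit \<tau> x * d \<tau> x) / cond_mgf l d \<tau> x \<le> exp (l * D)"
    if "\<tau> \<in> {1..n}" for \<tau>
  proof -
    have \<tau>: "\<tau> \<in> {1..T}"
      using that assms by auto
    show "0 \<le> exp (l * hit \<tau> x * d \<tau> x) / cond_mgf l d \<tau> x"
      using one_le_cond_mgf[OF \<tau> assms(2)] by simp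
    have "exp (l * hit \<tau> x * d \<tau> x) / cond_mgf l d \<tau> x \<le> exp (l * hit \<tau> x * d \<tau> x)"
      using one_le_cond_mgf[OF \<tau> assms(2)] by (intro divide_le_self) auto
    also have "\<dots> \<le> exp (l * D)"
      using exp_mult_bounds[OF \<tau> assms(2)] by (simp add: hit_def)
    finally show "exp (l * hit \<tau> x * d \<tau> x) / cond_mgf l d \<tau> x \<le> exp (l * D)" .
  qed
  have "0 \<le> exp_mart l d n x"
    unfolding exp_mart_def using factor(1) by (rule prod_nonneg)
  moreover have "exp_mart l d n x \<le> (\<Prod>\<tau>\<in>{1..n}. exp (l * D))"
    unfolding exp_mart_def using factor by (intro prod_mono conjI)
  ultimately show ?thesis
    by simp
qed

lemma integrable_exp_mart:
  assumes "n \<le> T"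
  shows "integrable M (exp_mart l d n)"
proof (rule integrable_const_bound[where B="exp (l * D) ^ n"])
  show "AE x in M. norm (exp_mart l d n x) \<le> exp (l * D) ^ n"
    using exp_mart_bounds[OF assms] by (intro AE_I2) simp
  show "exp_mart l d n \<in> borel_measurable M"
    using measurable_filtration[OF exp_mart_measurable[OF assms] assms] .
qed

lemma integral_mult_exp_div_cond_mgf:
  assumes t: "t \<in> {1..T}" and Z: "Z \<in> borel_measurable (F (t - 1))"
    and Z_bound: "\<And>x. x \<in> space M \<Longrightarrow> \<bar>Z x\<bar> \<le> B"
  shows "(\<integral>x. Z x * (exp (l * hit t x * d t x) / cond_mgf l d t x) \<partial>M) = (\<integral>x. Z x \<partial>M)"
proof -
  define U where "U x = Z x / cond_mgf l d t x" for x
  define V where "V x = U x * (exp (l * d t x) - 1)" for x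
  have "d t \<in> borel_measurable (F (t - 1))"
    using d_pred t by (simp add: predictable_def)
  then have E_meas: "(\<lambda>x. exp (l * d t x) - 1) \<in> borel_measurable (F (t - 1))"
    by (intro borel_measurable_diff borel_measurable_const measurable_compose[OF _ borel_measurable_exp]
        borel_measurable_times)
  then have U_meas: "U \<in> borel_measurable (F (t - 1))"
    unfolding U_def[abs_def] cond_mgf_def using Z
    by (intro borel_measurable_divide borel_measurable_add borel_measurable_times borel_measurable_const)
  then have V_meas: "V \<in> borel_measurable (F (t - 1))"
    unfolding V_def[abs_def] using E_meas by (rule borel_measurable_times)
  have U_bound: "\<bar>U x\<bar> \<le> B" and V_bound: "\<bar>V x\<bar> \<le> B * exp (l * D)" if "x \<in> space M" for x
  proof -
    have "\<bar>U x\<bar> \<le> \<bar>Z x\<bar>"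
      using divide_le_self[of "\<bar>Z x\<bar>"] one_le_cond_mgf[OF t that] by (simp add: U_def)
    then show "\<bar>U x\<bar> \<le> B"
      using Z_bound[OF that] by simp
    moreover have "0 \<le> exp (l * d t x) - 1" "exp (l * d t x) - 1 \<le> exp (l * D)"
      using exp_mult_bounds[OF t that] by linarith+
    ultimately show "\<bar>V x\<bar> \<le> B * exp (l * D)"
      by (simp add: V_def abs_mult mult_mono)
  qed
  have "t - 1 \<le> T"
    using t by (simp add: le_diff_conv)
  have U_int: "integrable M U"
    using U_bound measurable_filtration[OF U_meas \<open>t - 1 \<le> T\<close>]
    by (intro integrable_const_bound[where B=B] AE_I2) auto
  have V_int: "integrable M V"
    using V_bound measurable_filtration[OF V_meas \<open>t - 1 \<le> T\<close>]
    by (intro integrable_const_bound[where B="B * exp (l * D)"] AE_I2) auto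
  have "(\<integral>x. Z x * (exp (l * hit t x * d t x) / cond_mgf l d t x) \<partial>M) = (\<integral>x. U x + V x * hit t x \<partial>M)"
    by (intro Bochner_Integration.integral_cong) (simp_all add: U_def V_def hit_def right_diff_distrib)
  also have "\<dots> = (\<integral>x. U x + p * V x \<partial>M)"
    by (rule integral_add_mult_hit[OF t U_int V_meas V_int])
  also have "\<dots> = (\<integral>x. Z x \<partial>M)"
  proof (rule Bochner_Integration.integral_cong)
    fix x assume "x \<in> space M"
    then have "cond_mgf l d t x \<noteq> 0"
      using one_le_cond_mgf[OF t] by fastforce
    moreover have "U x + p * V x = U x * cond_mgf l d t x"
      by (simp add: V_def cond_mgf_def distrib_left mult_ac)
    ultimately show "U x + p * V x = Z x"
      by (simp add: U_def)
  qed simp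
  finally show ?thesis .
qed

lemma integral_exp_mart: "n \<le> T \<Longrightarrow> (\<integral>x. exp_mart l d n x \<partial>M) = 1"
proof (induction n)
  case 0
  then show ?case
    by (simp add: exp_mart_def prob_space)
next
  case (Suc n)
  have "(\<integral>x. exp_mart l d (Suc n) x \<partial>M)
      = (\<integral>x. exp_mart l d n x * (exp (l * hit (Suc n) x * d (Suc n) x) / cond_mgf l d (Suc n) x) \<partial>M)"
    by (simp add: exp_mart_def prod.nat_ivl_Suc' mult.commute)
  also have "\<dots> = (\<integral>x. exp_mart l d n x \<partial>M)"
    using Suc.prems exp_mart_measurable[of n] exp_mart_bounds[of n]
    by (intro integral_mult_exp_div_cond_mgf[where B="exp (l * D) ^ n"]) auto
  finally show ?case
    using Suc by simp
qed

lemma exp_mart_lower_bound: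
  assumes "l * D \<le> 1/4" "t \<le> T" "x \<in> space M"
  shows "exp (l * (\<Sum>\<tau>\<in>{1..t}. hit \<tau> x * d \<tau> x) - 1.25 * p * l * (\<Sum>\<tau>\<in>{1..t}. d \<tau> x))
    \<le> exp_mart l d t x"
proof -
  have cond_mgf: "0 < cond_mgf l d \<tau> x \<and> cond_mgf l d \<tau> x \<le> exp (1.25 * p * l * d \<tau> x)"
    if "\<tau> \<in> {1..t}" for \<tau>
    using that assms one_le_cond_mgf[of \<tau> x] cond_mgf_le_exp[of \<tau> x] by fastforce
  have "exp (l * (\<Sum>\<tau>\<in>{1..t}. hit \<tau> x * d \<tau> x) - 1.25 * p * l * (\<Sum>\<tau>\<in>{1..t}. d \<tau> x))
      = (\<Prod>\<tau>\<in>{1..t}. exp (l * hit \<tau> x * d \<tau> x)) / (\<Prod>\<tau>\<in>{1..t}. exp (1.25 * p * l * d \<tau> x))"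
    by (simp add: exp_diff exp_sum sum_distrib_left mult.assoc)
  also have "\<dots> \<le> (\<Prod>\<tau>\<in>{1..t}. exp (l * hit \<tau> x * d \<tau> x)) / (\<Prod>\<tau>\<in>{1..t}. cond_mgf l d \<tau> x)"
    using cond_mgf by (intro divide_left_mono prod_mono mult_pos_pos prod_pos prod_nonneg) (auto intro: less_imp_le)
  also have "\<dots> = exp_mart l d t x"
    by (simp add: exp_mart_def prod_dividef)
  finally show ?thesis .
qed

end

lemma prob_weighted_hits_gt:
  assumes d_pred: "predictable d"
    and d_range: "\<And>t x. t \<in> {1..T} \<Longrightarrow> x \<in> space M \<Longrightarrow> 0 \<le> d t x \<and> d t x \<le> D"
    and "0 < D" "t \<le> T"
  shows "prob {x \<in> space M. 1.25 * p * (\<Sum>\<tau>\<in>{1..t}. d \<tau> x) + 4 * D * L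
    < (\<Sum>\<tau>\<in>{1..t}. hit \<tau> x * d \<tau> x)} \<le> exp (- L)"
proof -
  define l where "l = 1 / (4 * D)"
  have l: "0 \<le> l" "l * D \<le> 1/4"
    using \<open>0 < D\<close> by (auto simp: l_def)
  have [measurable]: "exp_mart l d t \<in> borel_measurable M"
    using measurable_filtration[OF exp_mart_measurable[OF l(1) d_pred d_range \<open>t \<le> T\<close>] \<open>t \<le> T\<close>] .
  have "{x \<in> space M. 1.25 * p * (\<Sum>\<tau>\<in>{1..t}. d \<tau> x) + 4 * D * L < (\<Sum>\<tau>\<in>{1..t}. hit \<tau> x * d \<tau> x)}
      \<subseteq> {x \<in> space M. exp L \<le> exp_mart l d t x}"
  proof safe
    fix x assume x: "x \<in> space M"
      and "1.25 * p * (\<Sum>\<tau>\<in>{1..t}. d \<tau> x) + 4 * D * L < (\<Sum>\<tau>\<in>{1..t}. hit \<tau> x * d \<tau> x)"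
    then have "L \<le> l * (\<Sum>\<tau>\<in>{1..t}. hit \<tau> x * d \<tau> x) - 1.25 * p * l * (\<Sum>\<tau>\<in>{1..t}. d \<tau> x)"
      using \<open>0 < D\<close> by (simp add: l_def field_simps)
    then have "exp L \<le> exp (l * (\<Sum>\<tau>\<in>{1..t}. hit \<tau> x * d \<tau> x) - 1.25 * p * l * (\<Sum>\<tau>\<in>{1..t}. d \<tau> x))"
      by simp
    also have "\<dots> \<le> exp_mart l d t x"
      by (rule exp_mart_lower_bound[OF l(1) d_pred d_range l(2) \<open>t \<le> T\<close> x])
    finally show "exp L \<le> exp_mart l d t x" .
  qed
  then have "prob {x \<in> space M. 1.25 * p * (\<Sum>\<tau>\<in>{1..t}. d \<tau> x) + 4 * D * L
      < (\<Sum>\<tau>\<in>{1..t}. hit \<tau> x * d \<tau> x)} \<le> prob {x \<in> space M. exp L \<le> exp_mart l d t x}"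
    by (rule finite_measure_mono) measurable
  also have "\<dots> \<le> (\<integral>x. exp_mart l d t x \<partial>M) / exp L"
    using exp_mart_bounds[OF l(1) d_pred d_range \<open>t \<le> T\<close>]
    by (intro integral_Markov_inequality_measure[OF integrable_exp_mart[OF l(1) d_pred d_range \<open>t \<le> T\<close>]
        sets.top AE_I2]) auto
  also have "\<dots> = exp (- L)"
    using integral_exp_mart[OF l(1) d_pred d_range \<open>t \<le> T\<close>] by (simp add: exp_minus field_simps)
  finally show ?thesis .
qed

definition corruption_bounded :: "(nat \<Rightarrow> 'a \<Rightarrow> real) \<Rightarrow> real \<Rightarrow> real \<Rightarrow> nat \<Rightarrow> 'a \<Rightarrow> bool" where
  "corruption_bounded c cmax L t x \<longleftrightarrow>
    Cai c I t j x \<le> 1.25 * p * Ca c t x + 21 * cmax * L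
    \<and> Cri c I t j x \<le> 1.25 * p * Cr c t x + 8 * cmax * sqrt (p * t * L) + 21 * cmax * L"

context
  fixes c :: "nat \<Rightarrow> 'a \<Rightarrow> real" and cmax L :: real
  assumes c_pred: "predictable c"
    and c_range: "\<And>t x. t \<in> {1..T} \<Longrightarrow> x \<in> space M \<Longrightarrow> 0 \<le> c t x \<and> c t x \<le> cmax"
    and cmax: "0 < cmax" and L: "0 \<le> L"
begin

lemma round_measurable:
  assumes "\<tau> \<in> {1..T}"
  shows "c \<tau> \<in> borel_measurable M" "I \<tau> \<in> measurable M (count_space UNIV)" "hit \<tau> \<in> borel_measurable M"
  using assms measurable_filtration[OF predictable_measurable[OF c_pred]]
    measurable_filtration[OF I_measurable] measurable_filtration[OF hit_measurable] by auto

lemma not_corruption_bounded_event: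
  assumes "t \<in> {1..T}"
  shows "{x \<in> space M. \<not> corruption_bounded c cmax L t x} \<in> events"
proof -
  have [measurable]: "c \<tau> \<in> borel_measurable M" "I \<tau> \<in> measurable M (count_space UNIV)"
    if "\<tau> \<in> {1..t}" for \<tau>
    using that assms round_measurable by auto
  note [measurable] = corruptions_measurable[where t=t and c=c and M=M and I=I]
  show ?thesis
    unfolding corruption_bounded_def using assms by measurable
qed

lemma corruption_bounded_if_hit_sums_bounded:
  assumes t: "t \<in> {1..T}" and x: "x \<in> space M"
    and "(\<Sum>\<tau>\<in>{1..t}. hit \<tau> x * c \<tau> x) \<le> 1.25 * p * (\<Sum>\<tau>\<in>{1..t}. c \<tau> x) + 4 * cmax * L"
    and "(\<Sum>\<tau>\<in>{1..t}. hit \<tau> x) \<le> 1.25 * p * t + 4 * L"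
    and "(\<Sum>\<tau>\<in>{1..t}. hit \<tau> x * (c \<tau> x)\<^sup>2) \<le> 1.25 * p * (\<Sum>\<tau>\<in>{1..t}. (c \<tau> x)\<^sup>2) + 4 * cmax\<^sup>2 * L"
  shows "corruption_bounded c cmax L t x"
proof -
  have "0 \<le> c \<tau> x \<and> c \<tau> x \<le> cmax" if "\<tau> \<in> {1..t}" for \<tau>
    using c_range that t x by auto
  then show ?thesis
    using assms corruption_bounds_of_count_bounds[where c=c and x=x and t=t and I=I and j=j]
      cmax p_nonneg[OF t] L
    unfolding corruption_bounded_def hit_def by blast
qed

lemma prob_not_corruption_bounded:
  assumes t: "t \<in> {1..T}"
  shows "prob {x \<in> space M. \<not> corruption_bounded c cmax L t x} \<le> 3 * exp (- L)"
proof -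
  have [measurable]: "c \<tau> \<in> borel_measurable M" "hit \<tau> \<in> borel_measurable M" if "\<tau> \<in> {1..t}" for \<tau>
    using that t round_measurable by auto
  have c2_pred: "predictable (\<lambda>t x. (c t x)\<^sup>2)"
    using c_pred unfolding predictable_def by (auto intro: borel_measurable_power)
  have c2_range: "0 \<le> (c t x)\<^sup>2 \<and> (c t x)\<^sup>2 \<le> cmax\<^sup>2" if "t \<in> {1..T}" "x \<in> space M" for t x
    using c_range[OF that] by (simp add: power_mono)
  let ?B1 = "{x \<in> space M. 1.25 * p * (\<Sum>\<tau>\<in>{1..t}. c \<tau> x) + 4 * cmax * L < (\<Sum>\<tau>\<in>{1..t}. hit \<tau> x * c \<tau> x)}"
  let ?B2 = "{x \<in> space M. 1.25 * p * t + 4 * L < (\<Sum>\<tau>\<in>{1..t}. hit \<tau> x)}"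
  let ?B3 = "{x \<in> space M. 1.25 * p * (\<Sum>\<tau>\<in>{1..t}. (c \<tau> x)\<^sup>2) + 4 * cmax\<^sup>2 * L
    < (\<Sum>\<tau>\<in>{1..t}. hit \<tau> x * (c \<tau> x)\<^sup>2)}"
  have "{x \<in> space M. \<not> corruption_bounded c cmax L t x} \<subseteq> ?B1 \<union> ?B2 \<union> ?B3"
  proof
    fix x assume x: "x \<in> {x \<in> space M. \<not> corruption_bounded c cmax L t x}"
    show "x \<in> ?B1 \<union> ?B2 \<union> ?B3"
    proof (rule ccontr)
      assume "x \<notin> ?B1 \<union> ?B2 \<union> ?B3"
      then have "corruption_bounded c cmax L t x"
        using x by (intro corruption_bounded_if_hit_sums_bounded[OF t]) (auto simp: not_less)
      then show False
        using x by simp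
    qed
  qed
  moreover have "?B1 \<in> events" "?B2 \<in> events" "?B3 \<in> events"
    by measurable
  ultimately have "prob {x \<in> space M. \<not> corruption_bounded c cmax L t x} \<le> prob ?B1 + prob ?B2 + prob ?B3"
    using finite_measure_mono measure_Un_le[of "?B1 \<union> ?B2" M ?B3] measure_Un_le[of ?B1 M ?B2]
    by (meson order_trans add_right_mono sets.Un)
  moreover have "prob ?B1 \<le> exp (- L)" "prob ?B2 \<le> exp (- L)" "prob ?B3 \<le> exp (- L)"
    using t cmax prob_weighted_hits_gt[OF c_pred c_range cmax, of t L]
      prob_weighted_hits_gt[of "\<lambda>_ _. 1" 1 t L] prob_weighted_hits_gt[OF c2_pred c2_range, of t L]
    by (auto simp: predictable_def)
  ultimately show ?thesis
    by linarith
qed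

lemma prob_corruption_bounded:
  "1 - 3 * real T * exp (- L) \<le> prob {x \<in> space M. \<forall>t\<in>{1..T}. corruption_bounded c cmax L t x}"
  using prob_finite_Ball_ge[where S="{1..T}" and P="corruption_bounded c cmax L" and e="3 * exp (- L)"]
    not_corruption_bounded_event prob_not_corruption_bounded
  by (simp add: mult_ac)

end

end

theorem lemma15:
  fixes M :: "'a measure" and F :: "nat \<Rightarrow> 'a measure"
    and I :: "nat \<Rightarrow> 'a \<Rightarrow> nat" and c :: "nat \<Rightarrow> 'a \<Rightarrow> real"
    and \<alpha> :: "nat \<Rightarrow> real" and k kmax T j :: nat and cmax \<delta> :: real
  assumes M: "prob_space M"
    and filt_sub: "\<And>t. t \<le> T \<Longrightarrow> subalgebra M (F t)"
    and filt_mono: "\<And>s t. s \<le> t \<Longrightarrow> t \<le> T \<Longrightarrow> subalgebra (F t) (F s)"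
    and alpha_nonneg: "\<And>l. l \<in> {k..kmax} \<Longrightarrow> \<alpha> l \<ge> 0"
    and alpha_sum: "(\<Sum>l\<in>{k..kmax}. \<alpha> l) = 1"
    and cmax: "cmax > 0"
    and delta: "0 < \<delta>" "\<delta> < 1"
    and I_meas: "\<And>t. t \<in> {1..T} \<Longrightarrow> I t \<in> measurable (F t) (count_space UNIV)"
    and I_range: "\<And>t x. t \<in> {1..T} \<Longrightarrow> x \<in> space M \<Longrightarrow> I t x \<in> {k..kmax}"
    and I_dist: "\<And>t l. t \<in> {1..T} \<Longrightarrow> l \<in> {k..kmax} \<Longrightarrow>
                   measure M {x \<in> space M. I t x = l} = \<alpha> l"
    and I_indep: "\<And>t. t \<in> {1..T} \<Longrightarrow>
                   prob_space.indep_set M (sets (F (t - 1)))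
                     (sets (vimage_algebra (space M) (I t) (count_space UNIV)))"
    and c_meas: "\<And>t. t \<in> {1..T} \<Longrightarrow> c t \<in> borel_measurable (F (t - 1))"
    and c_range: "\<And>t x. t \<in> {1..T} \<Longrightarrow> x \<in> space M \<Longrightarrow> 0 \<le> c t x \<and> c t x \<le> cmax"
    and j: "j \<in> {k..kmax}"
  shows "measure M {x \<in> space M. \<forall>t\<in>{1..T}.
            Cai c I t j x \<le> 1.25 * \<alpha> j * Ca c t x + 21 * cmax * ln (real T / \<delta>)
          \<and> Cri c I t j x \<le> 1.25 * \<alpha> j * Cr c t x
                 + 8 * cmax * sqrt (\<alpha> j * real t * ln (real T / \<delta>))
                 + 21 * cmax * ln (real T / \<delta>)} \<ge> 1 - 3 * \<delta>"
proof -
  interpret sampled_index M F I T j "\<alpha> j"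
    unfolding sampled_index_def sampled_index_axioms_def
    using M filt_sub filt_mono I_meas I_dist[OF _ j] I_indep by blast
  have "predictable c"
    using c_meas by (simp add: predictable_def)
  \<comment> \<open>for \<open>T = 0\<close> this relies on \<open>ln 0 = 0\<close>\<close>
  have L: "0 \<le> ln (real T / \<delta>)" "3 * real T * exp (- ln (real T / \<delta>)) \<le> 3 * \<delta>"
    using delta by (cases "T = 0"; simp add: exp_minus)+
  then show ?thesis
    using prob_corruption_bounded[where L="ln (real T / \<delta>)", OF \<open>predictable c\<close> c_range cmax L(1)]
    unfolding corruption_bounded_def by linarith
qed

end
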